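(* Let $G$ be a connected graph, let $M \subseteq V(G)$ be a longest path transversal of $G$, and let $D \subseteq M$ be a connected dominating set of $G[M]$. Let $C_1,\dots,C_t$ be the connected components of $G \setminus M$, and let $C_{\max}$ be a path-maximal component with respect to $M$. Let $S \subseteq M$ be a set that dominates $\mathsf{bd}(C_{\max},M)$. Then $D \cup S$ is a longest path transversal of $G$.
   Context: All graphs are finite, simple. A longest path of a connected graph $G$ is a path of maximum length (number of edges) in $G$. A longest path transversal of $G$ is a set $S \subseteq V(G)$ such that every longest path of $G$ contains at least one vertex of $S$. For $X,Y\subseteq V(G)$, $\mathsf{bd}(X,Y)=\{x\in X : x \text{ has a neighbor in } Y\}$. A set $D$ is a connected dominating set of a graph $F$ if $F[D]$ is connected and every vertex of $F$ is in $D$ or adjacent to a vertex of $D$; a set $S$ dominates a set $Z$ if every vertex of $Z$ is in $S$ or has a neighbor in $S$. Given $M\subseteq V(G)$ and the components $C_1,\dots,C_t$ of $G\setminus M$, let $t_i$ be the length of a longest path of $G[C_i]$ having at least one endpoint in $\mathsf{bd}(C_i,M)$; a component $C_{\max}$ is path-maximal with respect to $M$ if $t_{\max}\ge t_i$ for all $1\le i\le t$. *)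

theory Defs
  imports Main
begin

definition graph :: "'a set \<Rightarrow> ('a \<Rightarrow> 'a \<Rightarrow> bool) \<Rightarrow> bool" where
  "graph V E \<longleftrightarrow> finite V \<and> (\<forall>u v. E u v \<longrightarrow> u \<in> V \<and> v \<in> V)
     \<and> (\<forall>u v. E u v \<longrightarrow> E v u) \<and> (\<forall>v. \<not> E v v)"

definition is_path_in :: "('a \<Rightarrow> 'a \<Rightarrow> bool) \<Rightarrow> 'a set \<Rightarrow> 'a list \<Rightarrow> bool" where
  "is_path_in E X p \<longleftrightarrow> p \<noteq> [] \<and> distinct p \<and> set p \<subseteq> X
     \<and> (\<forall>i. Suc i < length p \<longrightarrow> E (p ! i) (p ! Suc i))"

definition plen :: "'a list \<Rightarrow> nat" where
  "plen p = length p - 1"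

definition connected_set :: "('a \<Rightarrow> 'a \<Rightarrow> bool) \<Rightarrow> 'a set \<Rightarrow> bool" where
  "connected_set E X \<longleftrightarrow> X \<noteq> {} \<and>
     (\<forall>u\<in>X. \<forall>v\<in>X. \<exists>p. is_path_in E X p \<and> hd p = u \<and> last p = v)"

definition longest_path :: "'a set \<Rightarrow> ('a \<Rightarrow> 'a \<Rightarrow> bool) \<Rightarrow> 'a list \<Rightarrow> bool" where
  "longest_path V E p \<longleftrightarrow> is_path_in E V p \<and> (\<forall>q. is_path_in E V q \<longrightarrow> plen q \<le> plen p)"

definition lp_transversal :: "'a set \<Rightarrow> ('a \<Rightarrow> 'a \<Rightarrow> bool) \<Rightarrow> 'a set \<Rightarrow> bool" where
  "lp_transversal V E S \<longleftrightarrow> S \<subseteq> V \<and> (\<forall>p. longest_path V E p \<longrightarrow> set p \<inter> S \<noteq> {})"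

definition bd :: "('a \<Rightarrow> 'a \<Rightarrow> bool) \<Rightarrow> 'a set \<Rightarrow> 'a set \<Rightarrow> 'a set" where
  "bd E X Y = {x \<in> X. \<exists>y\<in>Y. E x y}"

definition dominates :: "('a \<Rightarrow> 'a \<Rightarrow> bool) \<Rightarrow> 'a set \<Rightarrow> 'a set \<Rightarrow> bool" where
  "dominates E S Z \<longleftrightarrow> (\<forall>z\<in>Z. z \<in> S \<or> (\<exists>s\<in>S. E z s))"

definition connected_dominating_set :: "('a \<Rightarrow> 'a \<Rightarrow> bool) \<Rightarrow> 'a set \<Rightarrow> 'a set \<Rightarrow> bool" where
  "connected_dominating_set E F D \<longleftrightarrow> D \<subseteq> F \<and> connected_set E D \<and> dominates E D F"

definition component :: "('a \<Rightarrow> 'a \<Rightarrow> bool) \<Rightarrow> 'a set \<Rightarrow> 'a set \<Rightarrow> bool" where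
  "component E X C \<longleftrightarrow> C \<subseteq> X \<and> connected_set E C \<and>
     (\<forall>C'. C \<subseteq> C' \<and> C' \<subseteq> X \<and> connected_set E C' \<longrightarrow> C' = C)"

definition tval :: "('a \<Rightarrow> 'a \<Rightarrow> bool) \<Rightarrow> 'a set \<Rightarrow> 'a set \<Rightarrow> nat" where
  "tval E M C = Max {plen p | p. is_path_in E C p \<and>
       (hd p \<in> bd E C M \<or> last p \<in> bd E C M)}"

definition path_maximal :: "'a set \<Rightarrow> ('a \<Rightarrow> 'a \<Rightarrow> bool) \<Rightarrow> 'a set \<Rightarrow> 'a set \<Rightarrow> bool" where
  "path_maximal V E M Cmax \<longleftrightarrow> component E (V - M) Cmax \<and>
     (\<forall>C. component E (V - M) C \<longrightarrow> tval E M C \<le> tval E M Cmax)"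

end

theory Submission
  imports Defs
begin

text \<open>
  Suppose a longest path P avoids D \<union> S. Since M is a transversal, P meets M. A vertex m
  of P in M - D has a neighbour in the connected set D, so for every s \<in> S there is a path
  inside D \<union> S, hence disjoint from P, running from a neighbour of m to s.

  If P meets Cmax, then P or its reverse steps from some m \<in> M to a vertex c of
  bd(Cmax, M). As c has a neighbour s \<in> S, inserting the path from m to s between m and c
  lengthens P. Otherwise let x be the first vertex of P in M. The part of P before x is a
  path in a component C of G - M ending in bd(C, M), so it has at most t_max edges.
  Replacing it by a path with t_max edges in Cmax ending at a boundary vertex, followed
  by the path through D \<union> S reversed, again lengthens P.
\<close>

lemma graph_symp: "graph V E \<Longrightarrow> symp E"
  by (auto simp: graph_def intro: sympI)

subsection \<open>Paths\<close>

lemma is_path_in_iff_successively: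
  "is_path_in E X p \<longleftrightarrow> p \<noteq> [] \<and> distinct p \<and> set p \<subseteq> X \<and> successively E p"
  unfolding is_path_in_def successively_conv_nth ..

lemma is_path_in_mono: "is_path_in E X p \<Longrightarrow> X \<subseteq> Y \<Longrightarrow> is_path_in E Y p"
  by (auto simp: is_path_in_iff_successively)

lemma is_path_in_set: "is_path_in E X p \<Longrightarrow> is_path_in E (set p) p"
  by (auto simp: is_path_in_iff_successively)

lemma is_path_in_singleton [simp]: "is_path_in E X [x] \<longleftrightarrow> x \<in> X"
  by (auto simp: is_path_in_iff_successively)

lemma is_path_in_append_iff:
  assumes "p \<noteq> []" "q \<noteq> []"
  shows "is_path_in E X (p @ q) \<longleftrightarrow>
    is_path_in E X p \<and> is_path_in E X q \<and> set p \<inter> set q = {} \<and> E (last p) (hd q)"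
  using assms by (auto simp: is_path_in_iff_successively successively_append_iff)

lemma is_path_in_infix: "is_path_in E X (p @ q @ r) \<Longrightarrow> q \<noteq> [] \<Longrightarrow> is_path_in E X q"
  by (auto simp: is_path_in_iff_successively successively_append_iff)

lemma is_path_in_rev: "symp E \<Longrightarrow> is_path_in E X p \<Longrightarrow> is_path_in E X (rev p)"
  by (auto simp: is_path_in_iff_successively elim: successively_mono dest: sympD)

lemma finite_paths: "finite X \<Longrightarrow> finite {p. is_path_in E X p}"
  by (rule finite_subset[OF _ finite_subset_distinct]) (auto simp: is_path_in_iff_successively)

lemma plen_append: "p \<noteq> [] \<Longrightarrow> q \<noteq> [] \<Longrightarrow> plen (p @ q) = plen p + plen q + 1"
  unfolding plen_def by (cases p; cases q) auto

lemma plen_rev [simp]: "plen (rev p) = plen p"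
  by (simp add: plen_def)

lemma plen_Cons [simp]: "plen (x # p) = length p"
  by (simp add: plen_def)

lemma longest_path_rev: "symp E \<Longrightarrow> longest_path V E p \<Longrightarrow> longest_path V E (rev p)"
  by (simp add: longest_path_def is_path_in_rev)

lemma is_path_in_detour:
  assumes "is_path_in E X (p @ q)" and "p \<noteq> []" "q \<noteq> []"
    and r: "is_path_in E X r" "set r \<inter> set (p @ q) = {}"
    and "E (last p) (hd r)" "E (last r) (hd q)"
  shows "is_path_in E X (p @ r @ q)" and "plen (p @ q) < plen (p @ r @ q)"
proof -
  have "r \<noteq> []"
    using r by (simp add: is_path_in_iff_successively)
  then show "is_path_in E X (p @ r @ q)"
    using assms by (auto simp: is_path_in_append_iff)
  show "plen (p @ q) < plen (p @ r @ q)"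
    using \<open>r \<noteq> []\<close> assms by (simp add: plen_append)
qed

lemma split_list_enter:
  assumes "x \<in> set xs" "P x" "\<not> P (hd xs)"
  obtains ys zs where "xs = ys @ zs" "ys \<noteq> []" "zs \<noteq> []" "\<not> P (last ys)" "P (hd zs)"
proof -
  obtain ys x' zs where split: "xs = ys @ x' # zs" "P x'" "\<forall>y \<in> set ys. \<not> P y"
    using split_list_first_propE[of xs P] assms(1,2) by blast
  have "ys \<noteq> []"
    using split(1,2) assms(3) by (cases ys) auto
  then show ?thesis
    using that[of ys "x' # zs"] split by simp
qed

lemma split_list_crossing:
  assumes "x \<in> set xs" "P x" "y \<in> set xs" "\<not> P y"
  obtains ys zs where "xs = ys @ zs \<or> rev xs = ys @ zs" "ys \<noteq> []" "zs \<noteq> []"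
    "\<not> P (last ys)" "P (hd zs)"
proof (cases "P (hd xs)")
  case False
  then show ?thesis
    using split_list_enter[of x xs P] assms(1,2) that by metis
next
  case True
  obtain ys zs where "xs = ys @ zs" "ys \<noteq> []" "zs \<noteq> []" "P (last ys)" "\<not> P (hd zs)"
    using split_list_enter[of y xs "\<lambda>z. \<not> P z"] assms(3,4) True by auto
  then show ?thesis
    using that[of "rev zs" "rev ys"] by (simp add: hd_rev last_rev)
qed

subsection \<open>Connectivity and components\<close>

lemma connected_set_path_set:
  assumes "symp E" and p: "is_path_in E X p"
  shows "connected_set E (set p)"
  unfolding connected_set_def
proof (intro conjI ballI)
  show "set p \<noteq> {}"
    using p by (simp add: is_path_in_iff_successively)
  have pp: "is_path_in E (set p) p"
    using p by (rule is_path_in_set)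
  fix u v assume u: "u \<in> set p" and v: "v \<in> set p"
  obtain a1 a2 where p_split: "p = a1 @ u # a2"
    using split_list[OF u] by blast
  show "\<exists>q. is_path_in E (set p) q \<and> hd q = u \<and> last q = v"
  proof (cases "v \<in> set (u # a2)")
    case True
    then obtain b1 b2 where u_split: "u # a2 = b1 @ v # b2"
      by (meson split_list)
    then have "is_path_in E (set p) (b1 @ [v])"
      using is_path_in_infix[of E "set p" a1 "b1 @ [v]" b2] pp p_split by simp
    moreover have "hd (b1 @ [v]) = u"
      using u_split by (cases b1) auto
    ultimately show ?thesis
      by (intro exI[of _ "b1 @ [v]"]) simp
  next
    case False
    then obtain b1 b2 where "a1 = b1 @ v # b2"
      using v p_split by (auto dest: split_list)
    then have "is_path_in E (set p) (v # b2 @ [u])"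
      using is_path_in_infix[of E "set p" b1 "v # b2 @ [u]" a2] pp p_split by simp
    then have "is_path_in E (set p) (rev (v # b2 @ [u]))"
      by (rule is_path_in_rev[OF \<open>symp E\<close>])
    then show ?thesis
      by (intro exI[of _ "rev (v # b2 @ [u])"]) simp
  qed
qed

lemma connected_set_insert:
  assumes "symp E" and C: "connected_set E C" and "c \<in> C" "E c w"
  shows "connected_set E (insert w C)"
proof (cases "w \<in> C")
  case True
  then show ?thesis
    using C by (simp add: insert_absorb)
next
  case False
  have to_w: "\<exists>q. is_path_in E (insert w C) q \<and> hd q = u \<and> last q = w" if "u \<in> C" for u
  proof -
    obtain q where q: "is_path_in E C q" "hd q = u" "last q = c"
      using C \<open>c \<in> C\<close> \<open>u \<in> C\<close> unfolding connected_set_def by blast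
    have "q \<noteq> []" "set q \<subseteq> C"
      using q(1) by (simp_all add: is_path_in_iff_successively)
    moreover have "is_path_in E (insert w C) (q @ [w])"
      using q \<open>q \<noteq> []\<close> \<open>set q \<subseteq> C\<close> \<open>E c w\<close> False is_path_in_mono[OF q(1) subset_insertI]
      by (auto simp: is_path_in_append_iff)
    ultimately show ?thesis
      using q by (intro exI[of _ "q @ [w]"]) simp
  qed
  show ?thesis
    unfolding connected_set_def
  proof (intro conjI ballI)
    fix u v assume u: "u \<in> insert w C" and v: "v \<in> insert w C"
    show "\<exists>q. is_path_in E (insert w C) q \<and> hd q = u \<and> last q = v"
    proof (cases "u = w"; cases "v = w")
      assume "u = w" "v = w"
      then show ?thesis
        by (intro exI[of _ "[w]"]) simp
    next
      assume "u = w" "v \<noteq> w"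
      then obtain q where "is_path_in E (insert w C) q" "hd q = v" "last q = u"
        using to_w v by blast
      then show ?thesis
        using is_path_in_rev[OF \<open>symp E\<close>] by (intro exI[of _ "rev q"]) (simp add: hd_rev last_rev)
    next
      assume "u \<noteq> w" "v = w"
      then show ?thesis
        using to_w u by blast
    next
      assume "u \<noteq> w" "v \<noteq> w"
      then obtain q where "is_path_in E C q" "hd q = u" "last q = v"
        using C u v unfolding connected_set_def by blast
      then show ?thesis
        using is_path_in_mono[of E C q "insert w C"] by blast
    qed
  qed simp
qed

lemma component_closed:
  assumes "symp E" and C: "component E X C" and "c \<in> C" "w \<in> X" "E c w"
  shows "w \<in> C"
proof -
  have "connected_set E (insert w C)"
    using connected_set_insert[OF \<open>symp E\<close> _ \<open>c \<in> C\<close> \<open>E c w\<close>] C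
    unfolding component_def by blast
  then have "insert w C = C"
    using C \<open>w \<in> X\<close> unfolding component_def by blast
  then show ?thesis
    by blast
qed

lemma component_containing:
  assumes "finite X" "connected_set E K" "K \<subseteq> X"
  obtains C where "component E X C" "K \<subseteq> C"
proof -
  let ?F = "{C. connected_set E C \<and> C \<subseteq> X}"
  have "finite ?F"
    by (rule finite_subset[of _ "Pow X"]) (use \<open>finite X\<close> in auto)
  moreover have "K \<in> ?F"
    using assms(2,3) by simp
  ultimately obtain C where C: "C \<in> ?F" "K \<subseteq> C" "\<forall>C' \<in> ?F. C \<subseteq> C' \<longrightarrow> C = C'"
    using finite_has_maximal2[of ?F K] by blast
  then have "component E X C"
    unfolding component_def by auto
  from this C(2) show ?thesis
    by (rule that)
qed

lemma component_path_crossing: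
  assumes "symp E" and C: "component E (V - M) C" and p: "is_path_in E V p"
    and "x \<in> set p" "x \<in> C" "y \<in> set p" "y \<notin> C"
  obtains p1 p2 where "p = p1 @ p2 \<or> rev p = p1 @ p2" "p1 \<noteq> []" "p2 \<noteq> []"
    "last p1 \<in> M" "hd p2 \<in> C" "E (last p1) (hd p2)"
proof -
  obtain p1 p2 where split: "p = p1 @ p2 \<or> rev p = p1 @ p2" "p1 \<noteq> []" "p2 \<noteq> []"
    "last p1 \<notin> C" "hd p2 \<in> C"
    using split_list_crossing[of x p "\<lambda>z. z \<in> C" y] assms(4-7) by blast
  have "is_path_in E V (p1 @ p2)"
    using split(1) p is_path_in_rev[OF \<open>symp E\<close> p] by auto
  then have edge: "E (last p1) (hd p2)" and "is_path_in E V p1"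
    using split(2,3) by (simp_all add: is_path_in_append_iff)
  then have "last p1 \<in> V"
    using split(2) by (auto simp: is_path_in_iff_successively)
  have "last p1 \<in> M"
  proof (rule ccontr)
    assume "last p1 \<notin> M"
    then have "last p1 \<in> C"
      using component_closed[OF \<open>symp E\<close> C \<open>hd p2 \<in> C\<close>] edge \<open>last p1 \<in> V\<close> \<open>symp E\<close>
      by (auto dest: sympD)
    with split(4) show False
      by contradiction
  qed
  with split edge show ?thesis
    using that by blast
qed

lemma finite_boundary_path_lengths:
  "finite C \<Longrightarrow> finite {plen p |p. is_path_in E C p \<and> (hd p \<in> bd E C M \<or> last p \<in> bd E C M)}"
  by (rule finite_image_set, rule finite_subset[OF _ finite_paths]) auto

lemma plen_le_tval:
  assumes "finite C" "is_path_in E C p" "hd p \<in> bd E C M \<or> last p \<in> bd E C M"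
  shows "plen p \<le> tval E M C"
  unfolding tval_def using finite_boundary_path_lengths[OF \<open>finite C\<close>] assms(2,3)
  by (blast intro: Max_ge)

lemma tval_attained:
  assumes "symp E" "finite C" "z \<in> bd E C M"
  obtains c where "is_path_in E C c" "last c \<in> bd E C M" "plen c = tval E M C"
proof -
  let ?T = "{plen p |p. is_path_in E C p \<and> (hd p \<in> bd E C M \<or> last p \<in> bd E C M)}"
  have "plen [z] \<in> ?T"
    using \<open>z \<in> bd E C M\<close> unfolding bd_def by (intro CollectI exI[of _ "[z]"]) simp
  then have "tval E M C \<in> ?T"
    unfolding tval_def using finite_boundary_path_lengths[OF \<open>finite C\<close>] by (intro Max_in) auto
  then obtain c where c: "is_path_in E C c" "hd c \<in> bd E C M \<or> last c \<in> bd E C M"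
    "plen c = tval E M C"
    by auto
  show ?thesis
  proof (cases "last c \<in> bd E C M")
    case True
    with c show ?thesis
      by (intro that)
  next
    case False
    have "c \<noteq> []"
      using c(1) by (simp add: is_path_in_iff_successively)
    with c False show ?thesis
      using that[of "rev c"] is_path_in_rev[OF \<open>symp E\<close> c(1)] by (simp add: last_rev)
  qed
qed

lemma connected_dominating_set_path_to:
  assumes "symp E" and D: "connected_dominating_set E M D" and "m \<in> M - D" "s \<in> M"
  obtains r where "is_path_in E (insert s D) r" "E m (hd r)" "last r = s"
proof -
  have D_conn: "connected_set E D" and D_dom: "dominates E D M"
    using D unfolding connected_dominating_set_def by auto
  obtain d where "d \<in> D" "E m d"
    using D_dom \<open>m \<in> M - D\<close> unfolding dominates_def by blast
  show ?thesis
  proof (cases "s \<in> D")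
    case True
    then obtain q where "is_path_in E D q" "hd q = d" "last q = s"
      using D_conn \<open>d \<in> D\<close> unfolding connected_set_def by blast
    then show ?thesis
      using that[of q] \<open>E m d\<close> is_path_in_mono[of E D q "insert s D"] by blast
  next
    case False
    then obtain d' where "d' \<in> D" "E s d'"
      using D_dom \<open>s \<in> M\<close> unfolding dominates_def by blast
    obtain q where q: "is_path_in E D q" "hd q = d" "last q = d'"
      using D_conn \<open>d \<in> D\<close> \<open>d' \<in> D\<close> unfolding connected_set_def by blast
    have "q \<noteq> []" "set q \<subseteq> D"
      using q(1) by (simp_all add: is_path_in_iff_successively)
    have "is_path_in E (insert s D) (q @ [s])"
      using q \<open>q \<noteq> []\<close> \<open>set q \<subseteq> D\<close> False \<open>E s d'\<close> \<open>symp E\<close>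
        is_path_in_mono[OF q(1) subset_insertI]
      by (auto simp: is_path_in_append_iff dest: sympD)
    then show ?thesis
      using that[of "q @ [s]"] \<open>E m d\<close> q \<open>q \<noteq> []\<close> by simp
  qed
qed

subsection \<open>The reduction\<close>

locale transversal_reduction =
  fixes V :: "'a set" and E :: "'a \<Rightarrow> 'a \<Rightarrow> bool" and M D S Cmax :: "'a set"
  assumes graph: "graph V E"
    and connected: "connected_set E V"
    and M_subset: "M \<subseteq> V"
    and M_transversal: "lp_transversal V E M"
    and D_cds: "connected_dominating_set E M D"
    and Cmax_path_maximal: "path_maximal V E M Cmax"
    and S_subset: "S \<subseteq> M"
    and S_dominates: "dominates E S (bd E Cmax M)"
begin

lemma symp: "symp E"
  using graph by (rule graph_symp)

lemma finite_V: "finite V"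
  using graph by (simp add: graph_def)

lemma D_subset: "D \<subseteq> M"
  using D_cds by (simp add: connected_dominating_set_def)

lemma Cmax_component: "component E (V - M) Cmax"
  using Cmax_path_maximal by (simp add: path_maximal_def)

lemma Cmax_subset: "Cmax \<subseteq> V - M"
  using Cmax_component by (simp add: component_def)

lemma bd_Cmax_neighbour_in_S:
  assumes "z \<in> bd E Cmax M"
  obtains s where "s \<in> S" "E z s"
proof -
  have "z \<notin> S"
    using assms Cmax_subset S_subset by (auto simp: bd_def)
  then show ?thesis
    using assms S_dominates that unfolding dominates_def by blast
qed

lemma path_through_D_to_S:
  assumes "m \<in> M - D" "s \<in> S"
  obtains r where "is_path_in E V r" "set r \<subseteq> D \<union> S" "E m (hd r)" "last r = s"
proof -
  obtain r where r: "is_path_in E (insert s D) r" "E m (hd r)" "last r = s"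
    using connected_dominating_set_path_to[OF symp D_cds assms(1)] assms(2) S_subset by blast
  have "insert s D \<subseteq> V"
    using assms(2) S_subset D_subset M_subset by auto
  then show ?thesis
    using that[of r] r is_path_in_mono[OF r(1)] assms(2)
    by (auto simp: is_path_in_iff_successively)
qed

lemma bd_Cmax_nonempty:
  assumes "m \<in> M"
  obtains z where "z \<in> bd E Cmax M"
proof -
  obtain c where "c \<in> Cmax"
    using Cmax_component by (auto simp: component_def connected_set_def)
  moreover have "m \<in> V" "m \<notin> Cmax"
    using assms M_subset Cmax_subset by auto
  ultimately obtain w where w: "is_path_in E V w" "hd w = c" "last w = m"
    using connected Cmax_subset unfolding connected_set_def by blast
  then have "c \<in> set w" "m \<in> set w"
    by (auto simp: is_path_in_iff_successively)
  then obtain w1 w2 where "last w1 \<in> M" "hd w2 \<in> Cmax" "E (last w1) (hd w2)"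
    using component_path_crossing[OF symp Cmax_component w(1)] \<open>c \<in> Cmax\<close> \<open>m \<notin> Cmax\<close> by metis
  then show ?thesis
    using that symp unfolding bd_def by (blast dest: sympD)
qed

lemma plen_le_tval_Cmax:
  assumes A: "is_path_in E (V - M) A" and "m \<in> M" "E (last A) m"
  shows "plen A \<le> tval E M Cmax"
proof -
  have "finite (V - M)" "set A \<subseteq> V - M"
    using finite_V A by (auto simp: is_path_in_iff_successively)
  then obtain C where C: "component E (V - M) C" "set A \<subseteq> C"
    using component_containing connected_set_path_set[OF symp A] by blast
  have "is_path_in E C A"
    using A C(2) by (simp add: is_path_in_iff_successively)
  moreover have "last A \<in> bd E C M"
    using C(2) A assms(2,3) unfolding bd_def by (auto simp: is_path_in_iff_successively)
  moreover have "finite C"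
    using C(1) finite_V by (auto simp: component_def intro: finite_subset)
  ultimately have "plen A \<le> tval E M C"
    by (simp add: plen_le_tval)
  also have "\<dots> \<le> tval E M Cmax"
    using Cmax_path_maximal C(1) by (simp add: path_maximal_def)
  finally show ?thesis .
qed

lemma longest_path_entering_Cmax_meets_D_S:
  assumes longest: "longest_path V E (p1 @ p2)" and "p1 \<noteq> []" "p2 \<noteq> []"
    and "last p1 \<in> M" "hd p2 \<in> Cmax"
  shows "set (p1 @ p2) \<inter> (D \<union> S) \<noteq> {}"
proof
  assume avoid: "set (p1 @ p2) \<inter> (D \<union> S) = {}"
  have path: "is_path_in E V (p1 @ p2)"
    using longest by (simp add: longest_path_def)
  then have "E (last p1) (hd p2)"
    using assms(2,3) by (simp add: is_path_in_append_iff)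
  then have "hd p2 \<in> bd E Cmax M"
    using assms(4,5) symp unfolding bd_def by (blast dest: sympD)
  then obtain s where "s \<in> S" "E (hd p2) s"
    by (rule bd_Cmax_neighbour_in_S)
  have "last p1 \<in> set p1"
    using assms(2) by simp
  then have "last p1 \<in> M - D"
    using assms(4) avoid by auto
  then obtain r where r: "is_path_in E V r" "set r \<subseteq> D \<union> S" "E (last p1) (hd r)" "last r = s"
    using path_through_D_to_S \<open>s \<in> S\<close> by blast
  have "set r \<inter> set (p1 @ p2) = {}" "E (last r) (hd p2)"
    using r(2,4) avoid \<open>E (hd p2) s\<close> symp by (auto dest: sympD)
  then have "is_path_in E V (p1 @ r @ p2)" "plen (p1 @ p2) < plen (p1 @ r @ p2)"
    using is_path_in_detour[OF path assms(2,3) r(1) _ r(3)] by simp_all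
  then show False
    using longest by (auto simp: longest_path_def not_le[symmetric])
qed

lemma longest_path_avoiding_Cmax_meets_D_S:
  assumes longest: "longest_path V E p" and p_Cmax: "set p \<inter> Cmax = {}"
  shows "set p \<inter> (D \<union> S) \<noteq> {}"
proof
  assume avoid: "set p \<inter> (D \<union> S) = {}"
  have path: "is_path_in E V p" and max: "\<And>q. is_path_in E V q \<Longrightarrow> plen q \<le> plen p"
    using longest by (auto simp: longest_path_def)
  have "\<exists>x \<in> set p. x \<in> M"
    using M_transversal longest unfolding lp_transversal_def by blast
  then obtain A x R where p: "p = A @ x # R" and "x \<in> M" and A_out: "\<forall>y \<in> set A. y \<notin> M"
    by (rule split_list_first_propE)
  have "plen p \<le> tval E M Cmax + length R + 1"
  proof (cases "A = []")
    case True
    then show ?thesis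
      using p by simp
  next
    case False
    have "is_path_in E V A" "E (last A) x"
      using path p False by (simp_all add: is_path_in_append_iff)
    then have "plen A \<le> tval E M Cmax"
      using A_out \<open>x \<in> M\<close> plen_le_tval_Cmax[of A] by (auto simp: is_path_in_iff_successively)
    then show ?thesis
      using p False by (simp add: plen_append)
  qed
  obtain z where "z \<in> bd E Cmax M"
    using bd_Cmax_nonempty \<open>x \<in> M\<close> by blast
  moreover have "finite Cmax"
    using finite_V Cmax_subset finite_subset by blast
  ultimately obtain c where c: "is_path_in E Cmax c" "last c \<in> bd E Cmax M" "plen c = tval E M Cmax"
    using tval_attained[OF symp] by blast
  then obtain s where "s \<in> S" "E (last c) s"
    using bd_Cmax_neighbour_in_S by blast
  have "x \<in> M - D"
    using avoid p \<open>x \<in> M\<close> by auto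
  then obtain r where r: "is_path_in E V r" "set r \<subseteq> D \<union> S" "E x (hd r)" "last r = s"
    using path_through_D_to_S \<open>s \<in> S\<close> by blast
  have "c \<noteq> []" "r \<noteq> []"
    using c(1) r(1) by (simp_all add: is_path_in_iff_successively)
  have "is_path_in E V c" "set c \<subseteq> Cmax"
    using c(1) Cmax_subset is_path_in_mono[OF c(1)] by (auto simp: is_path_in_iff_successively)
  have "is_path_in E V (x # R)"
    using is_path_in_infix[of E V A "x # R" "[]"] path p by simp
  have "is_path_in E V (rev r @ x # R)"
    using \<open>is_path_in E V (x # R)\<close> is_path_in_rev[OF symp r(1)] \<open>r \<noteq> []\<close> r(2,3) avoid p symp
    by (auto simp: is_path_in_append_iff last_rev dest: sympD)
  moreover have "set c \<inter> set (rev r @ x # R) = {}"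
    using \<open>set c \<subseteq> Cmax\<close> Cmax_subset r(2) S_subset D_subset p_Cmax p by (simp add: p) blast
  ultimately have "is_path_in E V (c @ rev r @ x # R)"
    using \<open>is_path_in E V c\<close> \<open>c \<noteq> []\<close> \<open>r \<noteq> []\<close> r(4) \<open>E (last c) s\<close>
    by (simp add: is_path_in_append_iff hd_rev)
  moreover have "plen (c @ rev r @ x # R) = tval E M Cmax + plen r + length R + 2"
    using \<open>c \<noteq> []\<close> \<open>r \<noteq> []\<close> c(3) by (simp add: plen_append)
  ultimately show False
    using max \<open>plen p \<le> tval E M Cmax + length R + 1\<close> by fastforce
qed

theorem lp_transversal_D_union_S: "lp_transversal V E (D \<union> S)"
  unfolding lp_transversal_def
proof (intro conjI allI impI)
  show "D \<union> S \<subseteq> V"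
    using D_subset S_subset M_subset by blast
  fix p assume longest: "longest_path V E p"
  show "set p \<inter> (D \<union> S) \<noteq> {}"
  proof (cases "set p \<inter> Cmax = {}")
    case True
    with longest show ?thesis
      by (rule longest_path_avoiding_Cmax_meets_D_S)
  next
    case False
    then obtain y where "y \<in> set p" "y \<in> Cmax"
      by blast
    obtain x where "x \<in> set p" "x \<in> M"
      using M_transversal longest unfolding lp_transversal_def by blast
    then have "x \<notin> Cmax"
      using Cmax_subset by blast
    have path: "is_path_in E V p"
      using longest by (simp add: longest_path_def)
    obtain p1 p2 where split: "p = p1 @ p2 \<or> rev p = p1 @ p2" "p1 \<noteq> []" "p2 \<noteq> []"
      "last p1 \<in> M" "hd p2 \<in> Cmax"
      using component_path_crossing[OF symp Cmax_component path \<open>y \<in> set p\<close> \<open>y \<in> Cmax\<close>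
          \<open>x \<in> set p\<close> \<open>x \<notin> Cmax\<close>] by blast
    have "longest_path V E (p1 @ p2)"
      using split(1) longest longest_path_rev[OF symp longest] by auto
    then have "set (p1 @ p2) \<inter> (D \<union> S) \<noteq> {}"
      using split(2-5) by (rule longest_path_entering_Cmax_meets_D_S)
    moreover have "set (p1 @ p2) = set p"
      using split(1) by (metis set_rev)
    ultimately show ?thesis
      by simp
  qed
qed

end

theorem theorem3p1:
  fixes V :: "'a set" and E :: "'a \<Rightarrow> 'a \<Rightarrow> bool" and M D S Cmax :: "'a set"
  assumes "graph V E"
    and "connected_set E V"
    and "M \<subseteq> V"
    and "lp_transversal V E M"
    and "connected_dominating_set E M D"
    and "path_maximal V E M Cmax"
    and "S \<subseteq> M"
    and "dominates E S (bd E Cmax M)"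
  shows "lp_transversal V E (D \<union> S)"
  using assms by (rule transversal_reduction.lp_transversal_D_union_S[OF transversal_reduction.intro])

end
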